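(* Let $n\ge2$, $0\le m\le n(n-1)$ and $\nu=\lfloor \frac{m}{n}\rfloor$. Then $\mathbb G(n,m)$ is almost regular, with $n(\nu+1)-m$ vertices of in-degree $\nu$ and $m-n\nu$ vertices of in-degree $\nu+1$; more precisely, writing $d_i$ for the in-degree of vertex $i$, $(d_1,\dots,d_n)=(\nu,\dots,\nu,\nu+1,\dots,\nu+1)$, where $\nu$ appears $n(\nu+1)-m$ times followed by $\nu+1$ appearing $m-n\nu$ times.
   Context: For integers $n\ge2$ and $0\le m\le n(n-1)$, $\mathbb G(n,m)$ is the simple directed graph on vertex set $\{1,\dots,n\}$ whose arc set is $\{(\lceil \frac{i}{n-1}\rceil,\ n-((i-1)\bmod n)) : i=1,\dots,m\}$, where an arc $(j,k)$ goes from $j$ to $k$ and $a\bmod b\in\{0,\dots,b-1\}$; these $m$ pairs are pairwise distinct pairs of distinct vertices. A directed graph is almost regular if the difference between its largest and smallest in-degree is at most $1$. *)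

theory Defs
  imports Complex_Main
begin

text \<open>A digraph on vertex set {1..n} is given by its arc set (pairs (j,k) = arc from j to k).\<close>

definition GG_arcs :: "nat \<Rightarrow> nat \<Rightarrow> (nat \<times> nat) set" where
  "GG_arcs n m = {(nat \<lceil>real i / real (n - 1)\<rceil>, n - ((i - 1) mod n)) | i. i \<in> {1..m}}"

definition in_degree :: "(nat \<times> nat) set \<Rightarrow> nat \<Rightarrow> nat" where
  "in_degree A v = card {u. (u, v) \<in> A}"

definition almost_regular :: "nat set \<Rightarrow> (nat \<times> nat) set \<Rightarrow> bool" where
  "almost_regular V A \<longleftrightarrow>
     int (Max (in_degree A ` V)) - int (Min (in_degree A ` V)) \<le> 1"

end

theory Submission
  imports Defs
begin

(* Arc i has head n - ((i - 1) mod n), so the arcs entering v are those with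
   i - 1 = n - v (mod n); among i - 1 < m there are m div n such indices, plus one
   more exactly when n - v < m mod n.  Two such indices differ by at least n > n - 1,
   so their tails ceil(i / (n - 1)) are distinct, and the in-degree of v is this count. *)

lemma card_residue_class_lessThan:
  fixes n m c :: nat
  assumes "c < n"
  shows "card {j. j < m \<and> j mod n = c} = m div n + (if c < m mod n then 1 else 0)"
proof (induction m)
  case 0
  then show ?case by simp
next
  case (Suc m)
  have split: "{j. j < Suc m \<and> j mod n = c} =
      {j. j < m \<and> j mod n = c} \<union> (if m mod n = c then {m} else {})"
    by (auto simp: less_Suc_eq)
  have "card {j. j < Suc m \<and> j mod n = c} =
      card {j. j < m \<and> j mod n = c} + (if m mod n = c then 1 else 0)"
    unfolding split by (simp add: card_Un_disjoint)
  also have "\<dots> = Suc m div n + (if c < Suc m mod n then 1 else 0)"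
    using assms Suc.IH
    by (cases "Suc m mod n = 0") (auto simp: div_Suc mod_Suc split: if_splits)
  finally show ?case .
qed

lemma nat_ceiling_divide_strict_mono:
  fixes i i' d :: nat
  assumes "0 < d" and "i + d \<le> i'"
  shows "nat \<lceil>real i / real d\<rceil> < nat \<lceil>real i' / real d\<rceil>"
proof -
  have "real i / real d + 1 = (real i + real d) / real d"
    using assms by (simp add: field_simps)
  also have "\<dots> \<le> real i' / real d"
    using assms by (intro divide_right_mono) auto
  finally have "real i / real d + 1 \<le> real i' / real d" .
  then have "\<lceil>real i / real d\<rceil> + 1 \<le> \<lceil>real i' / real d\<rceil>"
    by (metis ceiling_add_one ceiling_mono)
  moreover have "0 \<le> real i / real d" by simp
  ultimately show ?thesis by linarith
qed

lemma in_degree_GG_arcs: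
  fixes n m v :: nat
  assumes "2 \<le> n" and "v \<in> {1..n}"
  shows "in_degree (GG_arcs n m) v = card {j. j < m \<and> j mod n = n - v}"
proof -
  define tail where "tail j = nat \<lceil>real (Suc j) / real (n - 1)\<rceil>" for j
  define J where "J = {j. j < m \<and> j mod n = n - v}"
  have head_eq: "n - j mod n = v \<longleftrightarrow> j mod n = n - v" for j
    using assms mod_less_divisor[of n j] by auto
  have in_arcs: "{u. (u, v) \<in> GG_arcs n m} = tail ` J"
  proof (intro set_eqI iffI)
    fix u assume "u \<in> {u. (u, v) \<in> GG_arcs n m}"
    then obtain i where "i \<in> {1..m}" "u = tail (i - 1)" "n - (i - 1) mod n = v"
      by (auto simp: GG_arcs_def tail_def)
    then show "u \<in> tail ` J"
      unfolding J_def head_eq by auto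
  next
    fix u assume "u \<in> tail ` J"
    then obtain j where "j < m" "n - j mod n = v" "u = tail j"
      unfolding J_def head_eq by auto
    then show "u \<in> {u. (u, v) \<in> GG_arcs n m}"
      unfolding GG_arcs_def tail_def by (auto intro!: exI[of _ "Suc j"])
  qed
  have "inj_on tail J"
  proof (rule linorder_inj_onI')
    fix j j' assume "j \<in> J" "j' \<in> J" "j < j'"
    then have "j mod n = j' mod n"
      by (simp add: J_def)
    then have "n dvd j' - j"
      using \<open>j < j'\<close> by (metis mod_eq_dvd_iff_nat less_imp_le)
    then have "j + n \<le> j'"
      using \<open>j < j'\<close> by (auto dest: dvd_imp_le)
    then have "Suc j + (n - 1) \<le> Suc j'"
      by simp
    then have "tail j < tail j'"
      unfolding tail_def using assms(1) by (intro nat_ceiling_divide_strict_mono) auto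
    then show "tail j \<noteq> tail j'"
      by simp
  qed
  then show ?thesis
    unfolding in_degree_def in_arcs J_def by (simp add: card_image)
qed

lemma in_degree_GG_arcs_eq:
  fixes n m v :: nat
  assumes "2 \<le> n" and "v \<in> {1..n}"
  shows "in_degree (GG_arcs n m) v = (if v \<le> n - m mod n then m div n else m div n + 1)"
proof -
  have "m mod n < n"
    using assms(1) by simp
  then show ?thesis
    using assms in_degree_GG_arcs card_residue_class_lessThan[of "n - v" n m] by auto
qed

lemma almost_regular_if_in_degrees_in:
  assumes "finite V" and "V \<noteq> {}" and "\<And>v. v \<in> V \<Longrightarrow> in_degree A v \<in> {d, d + 1}"
  shows "almost_regular V A"
proof -
  have "Max (in_degree A ` V) \<le> d + 1" and "d \<le> Min (in_degree A ` V)"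
    using assms(1,2) by (auto dest!: assms(3))
  then show ?thesis
    unfolding almost_regular_def by linarith
qed

lemma card_level_sets_of_step:
  fixes f :: "nat \<Rightarrow> nat"
  assumes "k \<le> n" and "\<And>v. v \<in> {1..n} \<Longrightarrow> f v = (if v \<le> k then a else a + 1)"
  shows "card {v \<in> {1..n}. f v = a} = k" and "card {v \<in> {1..n}. f v = a + 1} = n - k"
proof -
  have "{v \<in> {1..n}. f v = a} = {1..k}"
    using assms(1) by (auto simp: assms(2) split: if_splits)
  moreover have "{v \<in> {1..n}. f v = a + 1} = {k + 1..n}"
    using assms(1) by (auto simp: assms(2) split: if_splits)
  ultimately
  show "card {v \<in> {1..n}. f v = a} = k" and "card {v \<in> {1..n}. f v = a + 1} = n - k"
    by simp_all
qed

theorem proposition2: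
  fixes n m :: nat
  assumes "n \<ge> 2" and "m \<le> n * (n - 1)"
  defines "\<nu> \<equiv> m div n"
  shows "almost_regular {1..n} (GG_arcs n m)
    \<and> card {v \<in> {1..n}. in_degree (GG_arcs n m) v = \<nu>} = n * (\<nu> + 1) - m
    \<and> card {v \<in> {1..n}. in_degree (GG_arcs n m) v = \<nu> + 1} = m - n * \<nu>
    \<and> (\<forall>i \<in> {1..n}. in_degree (GG_arcs n m) i =
          (if i \<le> n * (\<nu> + 1) - m then \<nu> else \<nu> + 1))"
proof -
  define r where "r = m mod n"
  have "m = n * \<nu> + r" and "r < n"
    using assms(1) unfolding r_def \<nu>_def by simp_all
  then have threshold: "n * (\<nu> + 1) - m = n - r" and surplus: "m - n * \<nu> = r"
    by (simp_all add: algebra_simps)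
  have degree: "in_degree (GG_arcs n m) v = (if v \<le> n - r then \<nu> else \<nu> + 1)"
    if "v \<in> {1..n}" for v
    using in_degree_GG_arcs_eq[OF assms(1) that] unfolding r_def \<nu>_def .
  have "almost_regular {1..n} (GG_arcs n m)"
    using assms(1) degree by (intro almost_regular_if_in_degrees_in) auto
  moreover note card_level_sets_of_step[of "n - r" n "in_degree (GG_arcs n m)" \<nu>, OF _ degree]
  ultimately show ?thesis
    using degree threshold surplus \<open>r < n\<close> by simp
qed

end
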